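(* In a network satisfying (H1) and (H2) containing the two connected components $Y+S_0\rightleftarrows U_1\to\cdots\rightleftarrows U_L\to Y+S_L$ and $\widetilde Y+S_L\rightleftarrows V_L\to\widetilde Y+S_{L-1}\rightleftarrows\cdots\rightleftarrows V_1\to\widetilde Y+S_0$ ($L\ge1$), with rate constants as in the context and $\tilde K_j:=\tilde b_j+\tilde c_j$, the constants $\tilde a_L,\tilde b_L,\tilde c_L$ and, for $1\le j\le L-1$, the quantities $\tilde a_j$ and $\tilde K_j$ are identifiable from $s_L$ using $\dot s_L$ and $\ddot s_L$.
   Context: Species are capital letters, concentrations lower-case letters. Mass-action system: $\dot{\mathbf{x}}=\sum_{y\to y'}k_{yy'}\mathbf{x}^y(y'-y)$, rates $k_{yy'}>0$ (vector $\mathbf{k}$). Total derivative: $\dot\varphi=\sum_i\frac{\partial\varphi}{\partial x_i}\dot x_i$ with $\dot x_i$ replaced by the right-hand side; $\varphi^{(\ell)}$ its $\ell$-th iterate. A map $\psi$ of $\mathbf{k}$ is identifiable from $x$ using orders $1\le\ell\le D$ if for positive $\mathbf{k}^*,\mathbf{k}^{**}$, $x^{(\ell)}(\mathbf{x},\mathbf{k}^* )=x^{(\ell)}(\mathbf{x},\mathbf{k}^{**})$ as polynomials in $\mathbf{x}$ for all $1\le\ell\le D$ implies $\psi(\mathbf{k}^* )=\psi(\mathbf{k}^{**})$. (H1) Every connected component has the form $Y+S_0\rightleftarrows U_1\to\cdots\rightleftarrows U_L\to Y+S_L$ (reactions $Y+S_{j-1}\to U_j$, $U_j\to Y+S_{j-1}$,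 $U_j\to Y+S_j$), unique enzyme; intermediates distinct throughout the network; non-intermediates of a component pairwise distinct but may appear in other components; each complex in a unique component. $\mathscr{S}_U$ = substrates/products of the component of intermediate $U$. (H2) A partition $\mathscr{S}^{(0)}\sqcup\cdots\sqcup\mathscr{S}^{(M)}$ ($M\ge2$, nonempty, $\mathscr{S}^{(0)}$ the intermediates) with: for each intermediate $U$ with enzyme $Y$, some $\alpha\ge1$ has $\mathscr{S}_U\subseteq\mathscr{S}^{(\alpha)}$, $Y\notin\mathscr{S}^{(\alpha)}$. Rates: first component $Y+S_{j-1}\to U_j$: $a_j$; $U_j\to Y+S_{j-1}$: $b_j$; $U_j\to Y+S_j$: $c_j$. Second component: $\widetilde Y+S_j\to V_j$: $\tilde a_j$; $V_j\to\widetilde Y+S_j$: $\tilde b_j$; $V_j\to\widetilde Y+S_{j-1}$: $\tilde c_j$ ($1\le j\le L$). *)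

theory Defs
  imports "HOL-Analysis.Analysis"
begin

text \<open>Species are elements of a finite type 'n; concentrations are vectors x :: real^'n.
  Complexes are functions 'n \<Rightarrow> nat (stoichiometric vectors); reactions are pairs (y, y').\<close>

type_synonym 'n cplx = "'n \<Rightarrow> nat"
type_synonym 'n rxn = "'n cplx \<times> 'n cplx"

definition cplx1 :: "'n \<Rightarrow> 'n cplx" where
  "cplx1 u = (\<lambda>i. if i = u then 1 else 0)"

definition cplx2 :: "'n \<Rightarrow> 'n \<Rightarrow> 'n cplx" where
  "cplx2 a b = (\<lambda>i. (if i = a then 1 else 0) + (if i = b then 1 else 0))"

definition mono :: "'n cplx \<Rightarrow> real^'n::finite \<Rightarrow> real" where
  "mono y x = (\<Prod>i\<in>UNIV. (x $ i) ^ (y i))"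

definition mak :: "'n::finite rxn set \<Rightarrow> ('n rxn \<Rightarrow> real) \<Rightarrow> real^'n \<Rightarrow> real^'n" where
  "mak R k x = (\<Sum>r\<in>R. (k r * mono (fst r) x) *\<^sub>R (\<chi> i. real (snd r i) - real (fst r i)))"

definition tdiff :: "'n::finite rxn set \<Rightarrow> ('n rxn \<Rightarrow> real) \<Rightarrow> (real^'n \<Rightarrow> real) \<Rightarrow> (real^'n \<Rightarrow> real)" where
  "tdiff R k \<phi> = (\<lambda>x. frechet_derivative \<phi> (at x) (mak R k x))"

definition identifiable :: "'n::finite rxn set \<Rightarrow> 'n \<Rightarrow> nat \<Rightarrow> (('n rxn \<Rightarrow> real) \<Rightarrow> 'b) \<Rightarrow> bool" where
  "identifiable R s D \<psi> \<longleftrightarrow>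
     (\<forall>k1 k2. (\<forall>r\<in>R. k1 r > 0) \<longrightarrow> (\<forall>r\<in>R. k2 r > 0) \<longrightarrow>
        (\<forall>l\<in>{1..D}. (tdiff R k1 ^^ l) (\<lambda>x. x $ s) = (tdiff R k2 ^^ l) (\<lambda>x. x $ s)) \<longrightarrow>
        \<psi> k1 = \<psi> k2)"

text \<open>Component c has length len c,
  enzyme E c, substrates/products Sb c 0, ..., Sb c (len c), intermediates I c 1, ..., I c (len c):
  E+S_0 <-> U_1 -> E+S_1 <-> ... <-> U_L -> E+S_L.\<close>
definition enz_network :: "'c set \<Rightarrow> ('c \<Rightarrow> nat) \<Rightarrow> ('c \<Rightarrow> 'n) \<Rightarrow> ('c \<Rightarrow> nat \<Rightarrow> 'n)
     \<Rightarrow> ('c \<Rightarrow> nat \<Rightarrow> 'n) \<Rightarrow> 'n rxn set" where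
  "enz_network C len E Sb I =
     (\<Union>c\<in>C. \<Union>j\<in>{1..len c}.
        {(cplx2 (E c) (Sb c (j - 1)), cplx1 (I c j)),
         (cplx1 (I c j), cplx2 (E c) (Sb c (j - 1))),
         (cplx1 (I c j), cplx2 (E c) (Sb c j))})"

definition is_intermediate :: "'c set \<Rightarrow> ('c \<Rightarrow> nat) \<Rightarrow> ('c \<Rightarrow> nat \<Rightarrow> 'n) \<Rightarrow> 'n \<Rightarrow> bool" where
  "is_intermediate C len I s \<longleftrightarrow> (\<exists>c\<in>C. \<exists>j\<in>{1..len c}. s = I c j)"

definition H1 :: "'c set \<Rightarrow> ('c \<Rightarrow> nat) \<Rightarrow> ('c \<Rightarrow> 'n) \<Rightarrow> ('c \<Rightarrow> nat \<Rightarrow> 'n)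
     \<Rightarrow> ('c \<Rightarrow> nat \<Rightarrow> 'n) \<Rightarrow> bool" where
  "H1 C len E Sb I \<longleftrightarrow>
     finite C \<and>
     (\<forall>c\<in>C. len c \<ge> 1) \<and>
     \<comment> \<open>intermediates distinct throughout the network\<close>
     (\<forall>c\<in>C. \<forall>c'\<in>C. \<forall>j\<in>{1..len c}. \<forall>j'\<in>{1..len c'}. I c j = I c' j' \<longrightarrow> c = c' \<and> j = j') \<and>
     \<comment> \<open>intermediates are not enzymes or substrates anywhere\<close>
     (\<forall>c\<in>C. \<forall>c'\<in>C. \<forall>j\<in>{1..len c}. I c j \<noteq> E c' \<and> (\<forall>j'\<in>{0..len c'}. I c j \<noteq> Sb c' j')) \<and>
     \<comment> \<open>non-intermediates of a component pairwise distinct\<close>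
     (\<forall>c\<in>C. inj_on (Sb c) {0..len c} \<and> E c \<notin> Sb c ` {0..len c}) \<and>
     \<comment> \<open>each complex lies in a unique component\<close>
     (\<forall>c\<in>C. \<forall>c'\<in>C. \<forall>j\<in>{0..len c}. \<forall>j'\<in>{0..len c'}.
        cplx2 (E c) (Sb c j) = cplx2 (E c') (Sb c' j') \<longrightarrow> c = c')"

text \<open>Hypothesis (H2): partition of all species into S^(0) (the intermediates), S^(1), ..., S^(M),
  M \<ge> 2, all nonempty, given by the block index function part.\<close>
definition H2 :: "'c set \<Rightarrow> ('c \<Rightarrow> nat) \<Rightarrow> ('c \<Rightarrow> 'n) \<Rightarrow> ('c \<Rightarrow> nat \<Rightarrow> 'n)
     \<Rightarrow> ('c \<Rightarrow> nat \<Rightarrow> 'n) \<Rightarrow> bool" where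
  "H2 C len E Sb I \<longleftrightarrow>
     (\<exists>M (part :: 'n \<Rightarrow> nat). M \<ge> 2 \<and> part ` UNIV = {0..M} \<and>
        (\<forall>s. part s = 0 \<longleftrightarrow> is_intermediate C len I s) \<and>
        (\<forall>c\<in>C. \<exists>\<alpha>\<ge>1. (\<forall>j\<in>{0..len c}. part (Sb c j) = \<alpha>) \<and> part (E c) \<noteq> \<alpha>))"

end

theory Submission
  imports Defs
begin

text \<open>Write a_j, b_j, c_j for the rates of the second component. Evaluated at 0/1 indicator points
  of a few species, the polynomials s_L' and s_L'' receive contributions from only a few reactions:
  s_L' equals -a_L at 1_{Yt, S_L} and b_L at 1_{V_L}, while s_L'' equals -b_L (b_L + c_L) at 1_{V_L},
  -a_L (b_j + c_j) at 1_{S_L, V_j} and a_L (2 a_L + a_j + b_L) at 1_{Yt, S_L, S_j}. (H1) and (H2)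
  ensure that no other reaction of the network contributes at these points, and positivity of the
  rates lets one solve for the claimed quantities one after another.\<close>

lemma cplx2_commute: "cplx2 a b = cplx2 b a"
  by (auto simp: cplx2_def fun_eq_iff)

lemma cplx1_eq_iff [simp]: "cplx1 a = cplx1 b \<longleftrightarrow> a = b"
  by (auto simp: cplx1_def fun_eq_iff)

lemma cplx1_neq_cplx2 [simp]: "cplx1 w \<noteq> cplx2 a b" "cplx2 a b \<noteq> cplx1 w"
  by (auto simp: cplx1_def cplx2_def fun_eq_iff)

lemma cplx2_eq_cplx2D:
  assumes "a \<noteq> b" "cplx2 a b = cplx2 c d"
  shows "a = c \<and> b = d \<or> a = d \<and> b = c"
  using assms unfolding cplx2_def fun_eq_iff
  by (metis (full_types) add_cancel_right_right add_self_div_2 one_neq_zero)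

definition support :: "'n cplx \<Rightarrow> 'n set" where
  "support y = {i. y i \<noteq> 0}"

lemma support_cplx1 [simp]: "support (cplx1 w) = {w}"
  by (auto simp: support_def cplx1_def)

lemma support_cplx2 [simp]: "support (cplx2 a b) = {a, b}"
  by (auto simp: support_def cplx2_def)

lemma mono_cplx1 [simp]: "Defs.mono (cplx1 w) x = x $ w"
proof -
  have "Defs.mono (cplx1 w) x = (\<Prod>i\<in>UNIV. if i = w then x $ i else 1)"
    unfolding Defs.mono_def cplx1_def by (intro prod.cong) auto
  then show ?thesis by simp
qed

lemma mono_cplx2 [simp]: "Defs.mono (cplx2 a b) x = x $ a * x $ b"
proof -
  have "Defs.mono (cplx2 a b) x = (\<Prod>i\<in>UNIV. (if i = a then x $ i else 1) * (if i = b then x $ i else 1))"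
    unfolding Defs.mono_def cplx2_def by (intro prod.cong) (auto simp: power_add)
  then show ?thesis by (simp add: prod.distrib)
qed

lemma has_derivative_vec_nth: "((\<lambda>x. x $ i) has_derivative (\<lambda>h. h $ i)) F"
  by (rule bounded_linear_imp_has_derivative, rule bounded_linear_vec_nth)

lemma differentiable_mono: "Defs.mono y differentiable (at x)"
  unfolding Defs.mono_def differentiable_def
  by (rule exI, rule has_derivative_prod, rule has_derivative_power, rule has_derivative_vec_nth)

lemma frechet_derivative_mono_cplx1 [simp]:
  "frechet_derivative (Defs.mono (cplx1 w)) (at x) h = h $ w"
proof -
  have "Defs.mono (cplx1 w) = (\<lambda>x. x $ w)"
    by (simp add: fun_eq_iff)
  then show ?thesis
    by (simp add: frechet_derivative_at[OF has_derivative_vec_nth, symmetric])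
qed

lemma frechet_derivative_mono_cplx2 [simp]:
  "frechet_derivative (Defs.mono (cplx2 a b)) (at x) h = x $ a * h $ b + h $ a * x $ b"
proof -
  have "Defs.mono (cplx2 a b) = (\<lambda>x. x $ a * x $ b)"
    by (simp add: fun_eq_iff)
  moreover have "((\<lambda>x. x $ a * x $ b) has_derivative (\<lambda>h. x $ a * h $ b + h $ a * x $ b)) (at x)"
    by (intro has_derivative_mult has_derivative_vec_nth)
  ultimately show ?thesis
    by (simp add: frechet_derivative_at[symmetric])
qed

definition indicator_point :: "'n set \<Rightarrow> real^'n::finite" where
  "indicator_point A = (\<chi> i. if i \<in> A then 1 else 0)"

lemma indicator_point_nth [simp]: "indicator_point A $ i = (if i \<in> A then 1 else 0)"
  by (simp add: indicator_point_def)

lemma mono_indicator_point: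
  "Defs.mono y (indicator_point A) = (if support y \<subseteq> A then 1 else 0)"
proof (cases "support y \<subseteq> A")
  case True
  then have "y i = 0" if "i \<notin> A" for i
    using that by (auto simp: support_def)
  then have "(indicator_point A $ i) ^ y i = 1" for i
    by (cases "i \<in> A") auto
  then show ?thesis using True by (simp add: Defs.mono_def)
next
  case False
  then obtain i where "y i \<noteq> 0" "i \<notin> A" by (auto simp: support_def)
  then have "(indicator_point A $ i) ^ y i = 0" by simp
  then show ?thesis using False unfolding Defs.mono_def by (metis prod_zero finite UNIV_I)
qed

definition stoich_change :: "'n rxn \<Rightarrow> 'n \<Rightarrow> real" where
  "stoich_change r i = real (snd r i) - real (fst r i)"

lemma stoich_change_cplx [simp]:
  "stoich_change (cplx2 e s, cplx1 w) i =
     (if i = w then 1 else 0) - (if i = e then 1 else 0) - (if i = s then 1 else 0)"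
  "stoich_change (cplx1 w, cplx2 e s) i =
     (if i = e then 1 else 0) + (if i = s then 1 else 0) - (if i = w then 1 else 0)"
  by (simp_all add: stoich_change_def cplx1_def cplx2_def)

lemma mak_nth: "mak R k x $ i = (\<Sum>r\<in>R. k r * Defs.mono (fst r) x * stoich_change r i)"
  unfolding mak_def stoich_change_def by simp

definition enabled_reactions :: "'n rxn set \<Rightarrow> 'n set \<Rightarrow> 'n rxn set" where
  "enabled_reactions R A = {r \<in> R. support (fst r) \<subseteq> A}"

lemma mak_indicator_point:
  assumes "finite R"
  shows "mak R k (indicator_point A) $ i = (\<Sum>r\<in>enabled_reactions R A. k r * stoich_change r i)"
  unfolding mak_nth mono_indicator_point enabled_reactions_def
  using assms by (simp add: sum.inter_filter) (rule sum.cong; simp)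

lemma tdiff_vec_nth: "tdiff R k (\<lambda>x. x $ s) = (\<lambda>x. mak R k x $ s)"
  unfolding tdiff_def by (simp add: frechet_derivative_at[OF has_derivative_vec_nth, symmetric])

lemma tdiff_mak_nth:
  "tdiff R k (\<lambda>x. mak R k x $ s) x =
     (\<Sum>r\<in>R. k r * stoich_change r s * frechet_derivative (Defs.mono (fst r)) (at x) (mak R k x))"
proof -
  have "((\<lambda>x. mak R k x $ s) has_derivative
     (\<lambda>h. \<Sum>r\<in>R. k r * stoich_change r s * frechet_derivative (Defs.mono (fst r)) (at x) h)) (at x)"
    unfolding mak_nth
  proof (rule has_derivative_sum)
    fix r assume "r \<in> R"
    have "(Defs.mono (fst r) has_derivative frechet_derivative (Defs.mono (fst r)) (at x)) (at x)"
      using differentiable_mono frechet_derivative_works by blast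
    then have "((\<lambda>x. k r * stoich_change r s * Defs.mono (fst r) x) has_derivative
       (\<lambda>h. k r * stoich_change r s * frechet_derivative (Defs.mono (fst r)) (at x) h)) (at x)"
      by (rule has_derivative_mult_right)
    then show "((\<lambda>x. k r * Defs.mono (fst r) x * stoich_change r s) has_derivative
       (\<lambda>h. k r * stoich_change r s * frechet_derivative (Defs.mono (fst r)) (at x) h)) (at x)"
      by (simp add: ac_simps)
  qed
  then show ?thesis unfolding tdiff_def by (simp add: frechet_derivative_at[symmetric])
qed

lemma identifiable_order_twoI:
  assumes "\<And>k1 k2. \<forall>r\<in>R. 0 < k1 r \<Longrightarrow> \<forall>r\<in>R. 0 < k2 r \<Longrightarrow>
      (\<And>x. mak R k1 x $ s = mak R k2 x $ s) \<Longrightarrow>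
      (\<And>x. tdiff R k1 (\<lambda>x. mak R k1 x $ s) x = tdiff R k2 (\<lambda>x. mak R k2 x $ s) x) \<Longrightarrow>
      \<psi> k1 = \<psi> k2"
  shows "identifiable R s 2 \<psi>"
  unfolding identifiable_def
proof (intro allI impI)
  fix k1 k2 :: "'a rxn \<Rightarrow> real"
  assume pos: "\<forall>r\<in>R. 0 < k1 r" "\<forall>r\<in>R. 0 < k2 r"
    and eq: "\<forall>l\<in>{1..2}. (tdiff R k1 ^^ l) (\<lambda>x. x $ s) = (tdiff R k2 ^^ l) (\<lambda>x. x $ s)"
  have "(tdiff R k1 ^^ l) (\<lambda>x. x $ s) = (tdiff R k2 ^^ l) (\<lambda>x. x $ s)" if "l \<in> {1, 2}" for l
    using eq that by auto
  from this[of 1] this[of 2] show "\<psi> k1 = \<psi> k2"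
    by (intro assms[OF pos]) (simp_all add: numeral_2_eq_2 tdiff_vec_nth fun_eq_iff)
qed

lemma sum_supported_on:
  assumes "finite A" "B \<subseteq> A" "\<And>x. x \<in> A \<Longrightarrow> f x \<noteq> 0 \<Longrightarrow> x \<in> B"
  shows "sum f A = sum f B"
  using assms by (intro sum.mono_neutral_right) auto

lemma enz_network_memE:
  assumes "r \<in> enz_network C len E Sb I"
  obtains c j where "c \<in> C" "j \<in> {1..len c}"
    "r = (cplx2 (E c) (Sb c (j - 1)), cplx1 (I c j)) \<or> r = (cplx1 (I c j), cplx2 (E c) (Sb c (j - 1)))
     \<or> r = (cplx1 (I c j), cplx2 (E c) (Sb c j))"
  using assms unfolding enz_network_def by blast

text \<open>Only the second component enters the argument; the first one is handled by (H1) and (H2) like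
  every other component of the network.\<close>
locale reversed_chain_network =
  fixes C :: "'c set" and len :: "'c \<Rightarrow> nat" and E :: "'c \<Rightarrow> 'n::finite"
    and Sb I :: "'c \<Rightarrow> nat \<Rightarrow> 'n"
    and c :: 'c and L :: nat and Yt :: 'n and S V :: "nat \<Rightarrow> 'n"
  assumes H1: "H1 C len E Sb I" and H2: "H2 C len E Sb I" and L_pos: "1 \<le> L"
    and chain_mem: "c \<in> C" and chain_len: "len c = L" and chain_enzyme: "E c = Yt"
    and chain_substrate: "\<And>j. j \<le> L \<Longrightarrow> Sb c j = S (L - j)"
    and chain_intermediate: "\<And>j. j \<in> {1..L} \<Longrightarrow> I c j = V (L + 1 - j)"
begin

abbreviation "R \<equiv> enz_network C len E Sb I"
abbreviation "intermediate \<equiv> is_intermediate C len I"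
abbreviation "chain_substrates \<equiv> S ` {0..L}"

abbreviation "rxn_a m \<equiv> (cplx2 Yt (S m), cplx1 (V m))"
abbreviation "rxn_b m \<equiv> (cplx1 (V m), cplx2 Yt (S m))"
abbreviation "rxn_c m \<equiv> (cplx1 (V m), cplx2 Yt (S (m - 1)))"

lemma finite_R: "finite R"
proof -
  have "finite C" using H1 unfolding H1_def by blast
  then show ?thesis unfolding enz_network_def by simp
qed

lemma H1_conditions:
  "\<forall>c1\<in>C. \<forall>c2\<in>C. \<forall>j1\<in>{1..len c1}. \<forall>j2\<in>{1..len c2}. I c1 j1 = I c2 j2 \<longrightarrow> c1 = c2 \<and> j1 = j2"
  "\<forall>c1\<in>C. \<forall>c2\<in>C. \<forall>j1\<in>{1..len c1}. I c1 j1 \<noteq> E c2 \<and> (\<forall>j2\<in>{0..len c2}. I c1 j1 \<noteq> Sb c2 j2)"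
  "\<forall>c'\<in>C. inj_on (Sb c') {0..len c'} \<and> E c' \<notin> Sb c' ` {0..len c'}"
  "\<forall>c1\<in>C. \<forall>c2\<in>C. \<forall>j1\<in>{0..len c1}. \<forall>j2\<in>{0..len c2}.
     cplx2 (E c1) (Sb c1 j1) = cplx2 (E c2) (Sb c2 j2) \<longrightarrow> c1 = c2"
  using H1 unfolding H1_def by blast+

lemma intermediate_inj:
  "c1 \<in> C \<Longrightarrow> c2 \<in> C \<Longrightarrow> j1 \<in> {1..len c1} \<Longrightarrow> j2 \<in> {1..len c2} \<Longrightarrow> I c1 j1 = I c2 j2
   \<Longrightarrow> c1 = c2 \<and> j1 = j2"
  using H1_conditions(1) by blast

lemma enzyme_not_intermediate: "c' \<in> C \<Longrightarrow> \<not> intermediate (E c')"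
  using H1_conditions(2) unfolding is_intermediate_def by metis

lemma substrate_not_intermediate: "c' \<in> C \<Longrightarrow> j \<le> len c' \<Longrightarrow> \<not> intermediate (Sb c' j)"
  using H1_conditions(2) unfolding is_intermediate_def by (metis atLeastAtMost_iff le0)

lemma substrate_inj: "c' \<in> C \<Longrightarrow> i \<le> len c' \<Longrightarrow> j \<le> len c' \<Longrightarrow> Sb c' i = Sb c' j \<Longrightarrow> i = j"
  using H1_conditions(3) unfolding inj_on_def by simp

lemma enzyme_neq_substrate: "c' \<in> C \<Longrightarrow> j \<le> len c' \<Longrightarrow> E c' \<noteq> Sb c' j"
  using H1_conditions(3) by force

lemma complex_component_unique:
  "c1 \<in> C \<Longrightarrow> c2 \<in> C \<Longrightarrow> j1 \<le> len c1 \<Longrightarrow> j2 \<le> len c2 \<Longrightarrow>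
   cplx2 (E c1) (Sb c1 j1) = cplx2 (E c2) (Sb c2 j2) \<Longrightarrow> c1 = c2"
  using H1_conditions(4) by (meson atLeastAtMost_iff le0)

text \<open>This is the only use of (H2): the species S 0, ..., S L lie in one block of the partition,
  and a component whose enzyme lies in that block has all its substrates elsewhere.\<close>
lemma substrate_not_chain_substrate:
  assumes "c' \<in> C" "j \<le> len c'" "E c' \<in> chain_substrates"
  shows "Sb c' j \<notin> chain_substrates"
proof
  assume "Sb c' j \<in> chain_substrates"
  obtain part :: "'n \<Rightarrow> nat" where
    part: "\<forall>c\<in>C. \<exists>\<alpha>\<ge>1. (\<forall>j\<in>{0..len c}. part (Sb c j) = \<alpha>) \<and> part (E c) \<noteq> \<alpha>"
    using H2 unfolding H2_def by blast
  obtain \<alpha> where \<alpha>: "\<forall>j\<in>{0..L}. part (Sb c j) = \<alpha>"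
    using part chain_mem chain_len by auto
  have "part (S i) = \<alpha>" if "i \<le> L" for i
  proof -
    have "S i = Sb c (L - i)" using that chain_substrate[of "L - i"] by simp
    then show ?thesis using \<alpha> by simp
  qed
  then have "part (Sb c' j) = \<alpha>" "part (E c') = \<alpha>"
    using \<open>Sb c' j \<in> chain_substrates\<close> assms(3) by auto
  moreover obtain \<beta> where "\<forall>j\<in>{0..len c'}. part (Sb c' j) = \<beta>" "part (E c') \<noteq> \<beta>"
    using part assms(1) by blast
  ultimately show False
    using assms(2) by (metis atLeastAtMost_iff le0)
qed

text \<open>Step m of the chain in the orientation of the statement is step L + 1 - m of c.\<close>
lemma chain_index:
  assumes "1 \<le> m" "m \<le> L"
  shows "L + 1 - m \<in> {1..len c}" "Sb c (L + 1 - m - 1) = S m" "Sb c (L + 1 - m) = S (m - 1)"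
    "I c (L + 1 - m) = V m"
proof -
  show "L + 1 - m \<in> {1..len c}" using assms chain_len by auto
  show "Sb c (L + 1 - m - 1) = S m" "Sb c (L + 1 - m) = S (m - 1)"
    using assms chain_substrate[of "L - m"] chain_substrate[of "L + 1 - m"] by simp_all
  have "L + 1 - m \<in> {1..L}" "L + 1 - (L + 1 - m) = m" using assms by auto
  then show "I c (L + 1 - m) = V m" using chain_intermediate by metis
qed

lemma chain_reactions_mem:
  assumes "1 \<le> m" "m \<le> L"
  shows "rxn_a m \<in> R" "rxn_b m \<in> R" "rxn_c m \<in> R"
  using chain_index[OF assms] chain_mem chain_enzyme unfolding enz_network_def
  by (auto intro!: bexI[of _ c] bexI[of _ "L + 1 - m"])

lemma S_not_intermediate: "i \<le> L \<Longrightarrow> \<not> intermediate (S i)"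
  using substrate_not_intermediate[OF chain_mem, of "L - i"] chain_substrate[of "L - i"] chain_len
  by simp

lemma Yt_not_intermediate: "\<not> intermediate Yt"
  using enzyme_not_intermediate[OF chain_mem] chain_enzyme by simp

lemma V_intermediate: "1 \<le> m \<Longrightarrow> m \<le> L \<Longrightarrow> intermediate (V m)"
  using chain_index chain_mem unfolding is_intermediate_def by metis

lemma S_eq_iff [simp]: "i \<le> L \<Longrightarrow> j \<le> L \<Longrightarrow> S i = S j \<longleftrightarrow> i = j"
  using substrate_inj[OF chain_mem, of "L - i" "L - j"] chain_substrate[of "L - i"]
    chain_substrate[of "L - j"] chain_len
  by auto

lemma V_eq_iff [simp]: "1 \<le> m \<Longrightarrow> m \<le> L \<Longrightarrow> 1 \<le> m' \<Longrightarrow> m' \<le> L \<Longrightarrow> V m = V m' \<longleftrightarrow> m = m'"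
  using intermediate_inj[OF chain_mem chain_mem chain_index(1)[of m] chain_index(1)[of m']]
    chain_index(4)[of m] chain_index(4)[of m']
  by auto

lemma Yt_neq_S [simp]: "i \<le> L \<Longrightarrow> Yt \<noteq> S i" "i \<le> L \<Longrightarrow> S i \<noteq> Yt"
  using enzyme_neq_substrate[OF chain_mem, of "L - i"] chain_substrate[of "L - i"] chain_len
    chain_enzyme
  by auto

lemma intermediate_neq:
  assumes "intermediate w"
  shows "w \<noteq> Yt" "i \<le> L \<Longrightarrow> w \<noteq> S i"
  using assms Yt_not_intermediate S_not_intermediate by auto

lemma V_neq [simp]:
  assumes "1 \<le> m" "m \<le> L"
  shows "V m \<noteq> Yt" "Yt \<noteq> V m" "i \<le> L \<Longrightarrow> V m \<noteq> S i" "i \<le> L \<Longrightarrow> S i \<noteq> V m"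
  using intermediate_neq[OF V_intermediate[OF assms]] by fastforce+

lemma rxn_b_neq_rxn_c: "1 \<le> m \<Longrightarrow> m \<le> L \<Longrightarrow> rxn_b m \<noteq> rxn_c m"
  using cplx2_eq_cplx2D[of Yt "S m" Yt "S (m - 1)"] by auto

lemma reaction_cases:
  assumes "r \<in> R"
  obtains (binding) e s w where "r = (cplx2 e s, cplx1 w)" "e \<noteq> s" "intermediate w"
      "\<not> intermediate e" "\<not> intermediate s" "e \<notin> chain_substrates \<or> s \<notin> chain_substrates"
    | (release) e s w where "r = (cplx1 w, cplx2 e s)" "e \<noteq> s" "intermediate w"
      "\<not> intermediate e" "\<not> intermediate s" "e \<notin> chain_substrates \<or> s \<notin> chain_substrates"
proof -
  obtain c' j where cj: "c' \<in> C" "j \<in> {1..len c'}" and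
    r: "r = (cplx2 (E c') (Sb c' (j - 1)), cplx1 (I c' j)) \<or> r = (cplx1 (I c' j), cplx2 (E c') (Sb c' (j - 1)))
      \<or> r = (cplx1 (I c' j), cplx2 (E c') (Sb c' j))"
    using enz_network_memE[OF assms] by blast
  have "intermediate (I c' j)" unfolding is_intermediate_def using cj by blast
  moreover have "E c' \<noteq> Sb c' i" "\<not> intermediate (E c')" "\<not> intermediate (Sb c' i)"
    "E c' \<notin> chain_substrates \<or> Sb c' i \<notin> chain_substrates" if "i \<le> len c'" for i
    using that enzyme_neq_substrate enzyme_not_intermediate substrate_not_intermediate
      substrate_not_chain_substrate cj(1) by blast+
  moreover have "j - 1 \<le> len c'" "j \<le> len c'" using cj by auto
  ultimately show ?thesis using r that by metis
qed

lemma reaction_from_V: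
  assumes "r \<in> R" "fst r = cplx1 (V m)" "1 \<le> m" "m \<le> L"
  shows "r = rxn_b m \<or> r = rxn_c m"
proof -
  obtain c' j where cj: "c' \<in> C" "j \<in> {1..len c'}" and
    r: "r = (cplx2 (E c') (Sb c' (j - 1)), cplx1 (I c' j)) \<or> r = (cplx1 (I c' j), cplx2 (E c') (Sb c' (j - 1)))
      \<or> r = (cplx1 (I c' j), cplx2 (E c') (Sb c' j))"
    using enz_network_memE[OF assms(1)] by blast
  then have "I c' j = I c (L + 1 - m)" using assms(2) chain_index(4)[OF assms(3,4)] by auto
  then have "c' = c" "j = L + 1 - m"
    using intermediate_inj[OF cj(1) chain_mem cj(2) chain_index(1)[OF assms(3,4)]] by auto
  then show ?thesis using r assms(2) chain_index[OF assms(3,4)] chain_enzyme by auto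
qed

lemma reaction_from_Yt_S:
  assumes "r \<in> R" "fst r = cplx2 Yt (S m)" "1 \<le> m" "m \<le> L"
  shows "r = rxn_a m"
proof -
  obtain c' j where cj: "c' \<in> C" "j \<in> {1..len c'}" and
    r: "r = (cplx2 (E c') (Sb c' (j - 1)), cplx1 (I c' j)) \<or> r = (cplx1 (I c' j), cplx2 (E c') (Sb c' (j - 1)))
      \<or> r = (cplx1 (I c' j), cplx2 (E c') (Sb c' j))"
    using enz_network_memE[OF assms(1)] by blast
  then have r_eq: "r = (cplx2 (E c') (Sb c' (j - 1)), cplx1 (I c' j))" using assms(2) by auto
  let ?p = "L + 1 - m"
  have j1: "j - 1 \<le> len c'" and p1: "?p - 1 \<le> len c" using cj chain_len by auto
  have eq: "cplx2 (E c') (Sb c' (j - 1)) = cplx2 (E c) (Sb c (?p - 1))"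
    using r_eq assms chain_index chain_enzyme by simp
  then have c': "c' = c" using complex_component_unique[OF cj(1) chain_mem j1 p1] by blast
  have "Sb c (j - 1) = Sb c (?p - 1)"
    using cplx2_eq_cplx2D[OF enzyme_neq_substrate[OF chain_mem] eq[unfolded c']]
      enzyme_neq_substrate[OF chain_mem p1] j1 c' by metis
  then have "j - 1 = ?p - 1" using substrate_inj[OF chain_mem _ p1] j1 c' by blast
  then have "j = ?p" using cj assms(3,4) by auto
  then show ?thesis using r_eq c' chain_index[OF assms(3,4)] chain_enzyme by simp
qed

lemma enabled_reactions_V:
  assumes m: "1 \<le> m" "m \<le> L" and B: "B \<subseteq> chain_substrates"
  shows "enabled_reactions R (insert (V m) B) = {rxn_b m, rxn_c m}"
proof (intro equalityI subsetI)
  fix r assume "r \<in> enabled_reactions R (insert (V m) B)"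
  then have r: "r \<in> R" and supp: "support (fst r) \<subseteq> insert (V m) B"
    unfolding enabled_reactions_def by auto
  from r show "r \<in> {rxn_b m, rxn_c m}"
  proof (cases rule: reaction_cases)
    case (binding e s w)
    have "{e, s} \<subseteq> insert (V m) B"
      using supp binding(1) by simp
    then have "e \<in> B" "s \<in> B"
      using binding(4,5) V_intermediate[OF m] by auto
    then show ?thesis using binding(6) B by auto
  next
    case (release e s w)
    have "w \<in> insert (V m) B"
      using supp release(1) by simp
    then have "w = V m"
      using release(3) B S_not_intermediate by auto
    then show ?thesis using reaction_from_V[OF r _ m] release(1) by auto
  qed
qed (use chain_reactions_mem[OF m] in \<open>auto simp: enabled_reactions_def\<close>)

lemma enabled_reactions_Yt_S:
  assumes M: "M \<subseteq> {1..L}"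
  shows "enabled_reactions R (insert Yt (S ` M)) = rxn_a ` M"
proof (intro equalityI subsetI)
  fix r assume "r \<in> enabled_reactions R (insert Yt (S ` M))"
  then have r: "r \<in> R" and supp: "support (fst r) \<subseteq> insert Yt (S ` M)"
    unfolding enabled_reactions_def by auto
  from r show "r \<in> rxn_a ` M"
  proof (cases rule: reaction_cases)
    case (binding e s w)
    have "{e, s} \<subseteq> insert Yt (S ` M)"
      using supp binding(1) by simp
    moreover have "S ` M \<subseteq> chain_substrates" using M by auto
    ultimately have "e = Yt \<and> s \<in> S ` M \<or> s = Yt \<and> e \<in> S ` M"
      using binding(2,6) by auto
    then obtain m where "m \<in> M" "fst r = cplx2 Yt (S m)"
      using binding(1) cplx2_commute by (metis fst_conv imageE)
    then show ?thesis using reaction_from_Yt_S[OF r] M by force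
  next
    case (release e s w)
    have "w \<in> insert Yt (S ` M)"
      using supp release(1) by simp
    then show ?thesis using release(3) M S_not_intermediate Yt_not_intermediate by auto
  qed
qed (use chain_reactions_mem M in \<open>auto simp: enabled_reactions_def\<close>)

lemma mak_at_V:
  assumes "1 \<le> m" "m \<le> L" "B \<subseteq> chain_substrates"
  shows "mak R k (indicator_point (insert (V m) B)) $ i =
    k (rxn_b m) * stoich_change (rxn_b m) i + k (rxn_c m) * stoich_change (rxn_c m) i"
  using assms rxn_b_neq_rxn_c by (simp add: mak_indicator_point finite_R enabled_reactions_V)

lemma mak_at_Yt_S:
  assumes "M \<subseteq> {1..L}"
  shows "mak R k (indicator_point (insert Yt (S ` M))) $ i = (\<Sum>m\<in>M. k (rxn_a m) * stoich_change (rxn_a m) i)"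
proof -
  have "inj_on rxn_a M"
  proof (rule inj_onI)
    fix x y assume "x \<in> M" "y \<in> M" "rxn_a x = rxn_a y"
    moreover have "x \<in> {1..L}" "y \<in> {1..L}" using assms \<open>x \<in> M\<close> \<open>y \<in> M\<close> by auto
    ultimately show "x = y" using V_eq_iff[of x y] by auto
  qed
  then show ?thesis using assms by (simp add: mak_indicator_point finite_R enabled_reactions_Yt_S sum.reindex)
qed

lemma mak_at_Yt_S_L: "mak R k (indicator_point {Yt, S L}) $ S L = - k (rxn_a L)"
  using mak_at_Yt_S[of "{L}"] L_pos by simp

lemma mak_at_V_L: "mak R k (indicator_point {V L}) $ S L = k (rxn_b L)"
  using mak_at_V[of L "{}"] L_pos by simp

lemma reaction_from_S_L_Yt: "r \<in> R \<Longrightarrow> fst r = cplx2 (S L) Yt \<Longrightarrow> r = rxn_a L"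
  using reaction_from_Yt_S[of r L] L_pos by (simp add: cplx2_commute[of "S L"])

lemma binding_reaction_with_S_L:
  assumes r: "r \<in> R" and r_binding: "fst r = cplx2 e s" and nz: "stoich_change r (S L) \<noteq> 0"
  obtains z where "fst r = cplx2 (S L) z" "z \<noteq> S L" "\<not> intermediate z" "z \<notin> chain_substrates"
    "stoich_change r (S L) = -1"
  using r
proof (cases rule: reaction_cases)
  case (binding e' s' w)
  have "S L \<noteq> w" using binding(3) intermediate_neq by auto
  have S_L: "S L \<in> chain_substrates" by auto
  have "S L = e' \<or> S L = s'" using nz binding(1) \<open>S L \<noteq> w\<close> by (auto split: if_splits)
  then show ?thesis
  proof
    assume "S L = e'"
    then show ?thesis using that[of s'] binding \<open>S L \<noteq> w\<close> S_L by auto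
  next
    assume "S L = s'"
    then show ?thesis
      using that[of e'] binding \<open>S L \<noteq> w\<close> S_L by (auto simp: cplx2_commute[of e'])
  qed
next
  case (release e' s' w)
  then show ?thesis using r_binding by simp
qed

lemma tdiff_at_V_L:
  "tdiff R k (\<lambda>x. mak R k x $ S L) (indicator_point {V L}) = - k (rxn_b L) * (k (rxn_b L) + k (rxn_c L))"
proof -
  let ?x = "indicator_point {V L}"
  let ?h = "mak R k ?x"
  have h: "?h $ i = k (rxn_b L) * stoich_change (rxn_b L) i + k (rxn_c L) * stoich_change (rxn_c L) i" for i
    using mak_at_V[of L "{}"] L_pos by simp
  have "tdiff R k (\<lambda>x. mak R k x $ S L) ?x =
    (\<Sum>r\<in>{rxn_b L, rxn_c L}. k r * stoich_change r (S L) * frechet_derivative (Defs.mono (fst r)) (at ?x) ?h)"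
    unfolding tdiff_mak_nth
  proof (rule sum_supported_on[OF finite_R])
    show "{rxn_b L, rxn_c L} \<subseteq> R" using chain_reactions_mem L_pos by auto
  next
    fix r assume r: "r \<in> R"
      and nz: "k r * stoich_change r (S L) * frechet_derivative (Defs.mono (fst r)) (at ?x) ?h \<noteq> 0"
    from r show "r \<in> {rxn_b L, rxn_c L}"
    proof (cases rule: reaction_cases)
      case (binding e s w)
      then have "e \<noteq> V L" "s \<noteq> V L" using V_intermediate L_pos by auto
      then show ?thesis using nz binding(1) by simp
    next
      case (release e s w)
      then have "?h $ w \<noteq> 0" using nz by simp
      then have "w = V L" using h release(3) intermediate_neq L_pos by (auto split: if_splits)
      then show ?thesis using reaction_from_V[OF r] release(1) L_pos by auto
    qed
  qed
  also have "\<dots> = k (rxn_b L) * ?h $ V L"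
    using rxn_b_neq_rxn_c[of L] L_pos by simp
  also have "\<dots> = - k (rxn_b L) * (k (rxn_b L) + k (rxn_c L))"
    using L_pos by (simp add: h algebra_simps)
  finally show ?thesis .
qed

lemma tdiff_at_S_L_V:
  assumes j: "1 \<le> j" "j < L"
  shows "tdiff R k (\<lambda>x. mak R k x $ S L) (indicator_point {S L, V j}) =
    - k (rxn_a L) * (k (rxn_b j) + k (rxn_c j))"
proof -
  let ?x = "indicator_point {S L, V j}"
  let ?h = "mak R k ?x"
  have h: "?h $ i = k (rxn_b j) * stoich_change (rxn_b j) i + k (rxn_c j) * stoich_change (rxn_c j) i" for i
    using mak_at_V[of j "{S L}"] j by (simp add: insert_commute)
  have j_le: "j \<le> L" "j - 1 \<le> L" using j by arith+
  have S_j: "S j \<in> chain_substrates" "S (j - 1) \<in> chain_substrates" "S (j - 1) \<noteq> S L"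
    using j j_le S_eq_iff[of "j - 1" L] by auto
  have h_S_L: "?h $ S L = 0" using h j S_j(3) by simp
  have h_support: "z \<in> {Yt, S j, S (j - 1), V j}" if "?h $ z \<noteq> 0" for z
    using that h by (auto split: if_splits)
  have "tdiff R k (\<lambda>x. mak R k x $ S L) ?x =
    (\<Sum>r\<in>{rxn_a L}. k r * stoich_change r (S L) * frechet_derivative (Defs.mono (fst r)) (at ?x) ?h)"
    unfolding tdiff_mak_nth
  proof (rule sum_supported_on[OF finite_R])
    show "{rxn_a L} \<subseteq> R" using chain_reactions_mem L_pos by auto
  next
    fix r assume r: "r \<in> R"
      and nz: "k r * stoich_change r (S L) * frechet_derivative (Defs.mono (fst r)) (at ?x) ?h \<noteq> 0"
    from r show "r \<in> {rxn_a L}"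
    proof (cases rule: reaction_cases)
      case (binding e s w)
      have "fst r = cplx2 e s" "stoich_change r (S L) \<noteq> 0" using binding(1) nz by auto
      then obtain z where z: "fst r = cplx2 (S L) z" "z \<noteq> S L" "\<not> intermediate z" "z \<notin> chain_substrates"
        "stoich_change r (S L) = -1"
        by (rule binding_reaction_with_S_L[OF r])
      have "?h $ z \<noteq> 0" using nz z(1,2) h_S_L by simp
      then have "z \<in> {Yt, S j, S (j - 1), V j}" by (rule h_support)
      then have "z = Yt" using z(3,4) V_intermediate[of j] S_j(1,2) j by auto
      then show ?thesis using reaction_from_S_L_Yt[OF r] z(1) by simp
    next
      case (release e s w)
      then have "?h $ w \<noteq> 0" using nz by simp
      then have "w \<in> {Yt, S j, S (j - 1), V j}" by (rule h_support)
      then have "w = V j"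
        using release(3) Yt_not_intermediate S_not_intermediate[of j] S_not_intermediate[of "j - 1"] j_le
        by auto
      then have "r = rxn_b j \<or> r = rxn_c j" using reaction_from_V[OF r] release(1) j by auto
      then show ?thesis using nz j S_j(3) by auto
    qed
  qed
  also have "\<dots> = - k (rxn_a L) * ?h $ Yt" using h_S_L L_pos by simp
  also have "\<dots> = - k (rxn_a L) * (k (rxn_b j) + k (rxn_c j))" using j by (simp add: h)
  finally show ?thesis .
qed

lemma tdiff_at_Yt_S_L_S:
  assumes j: "1 \<le> j" "j < L"
  shows "tdiff R k (\<lambda>x. mak R k x $ S L) (indicator_point {Yt, S L, S j}) =
    k (rxn_a L) * (2 * k (rxn_a L) + k (rxn_a j) + k (rxn_b L))"
proof -
  let ?x = "indicator_point {Yt, S L, S j}"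
  let ?h = "mak R k ?x"
  have j_le: "j \<le> L" "j - 1 \<le> L" "L - 1 \<le> L" using j by arith+
  have S_ne: "S j \<noteq> S L" "S (j - 1) \<noteq> S L" "S (L - 1) \<noteq> S L" "V j \<noteq> V L"
    using j j_le L_pos S_eq_iff[of j L] S_eq_iff[of "j - 1" L] S_eq_iff[of "L - 1" L] V_eq_iff[of j L]
    by auto
  have S_mem: "S j \<in> chain_substrates" "S L \<in> chain_substrates" using j_le by auto
  have h: "?h $ i = k (rxn_a L) * stoich_change (rxn_a L) i + k (rxn_a j) * stoich_change (rxn_a j) i" for i
    using mak_at_Yt_S[of "{L, j}"] j by simp
  have h_support: "z \<in> {Yt, S L, S j, V L, V j}" if "?h $ z \<noteq> 0" for z
    using that h by (auto split: if_splits)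
  have h_Yt: "?h $ Yt = - k (rxn_a L) - k (rxn_a j)"
    and h_S_L: "?h $ S L = - k (rxn_a L)"
    and h_V_L: "?h $ V L = k (rxn_a L)"
    using j j_le L_pos S_ne by (simp_all add: h)
  have "tdiff R k (\<lambda>x. mak R k x $ S L) ?x =
    (\<Sum>r\<in>{rxn_a L, rxn_b L}. k r * stoich_change r (S L) * frechet_derivative (Defs.mono (fst r)) (at ?x) ?h)"
    unfolding tdiff_mak_nth
  proof (rule sum_supported_on[OF finite_R])
    show "{rxn_a L, rxn_b L} \<subseteq> R" using chain_reactions_mem L_pos by auto
  next
    fix r assume r: "r \<in> R"
      and nz: "k r * stoich_change r (S L) * frechet_derivative (Defs.mono (fst r)) (at ?x) ?h \<noteq> 0"
    from r show "r \<in> {rxn_a L, rxn_b L}"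
    proof (cases rule: reaction_cases)
      case (binding e s w)
      have "fst r = cplx2 e s" "stoich_change r (S L) \<noteq> 0" using binding(1) nz by auto
      then obtain z where z: "fst r = cplx2 (S L) z" "z \<noteq> S L" "\<not> intermediate z" "z \<notin> chain_substrates"
        "stoich_change r (S L) = -1"
        by (rule binding_reaction_with_S_L[OF r])
      have "?h $ z \<noteq> 0 \<or> z \<in> {Yt, S L, S j}" using nz z(1) by (auto split: if_splits)
      then have "z \<in> {Yt, S L, S j, V L, V j}" using h_support by blast
      then have "z = Yt" using z(3,4) V_intermediate[of j] V_intermediate[of L] S_mem j_le j L_pos by auto
      then show ?thesis using reaction_from_S_L_Yt[OF r] z(1) by simp
    next
      case (release e s w)
      then have "?h $ w \<noteq> 0" using nz by simp
      then have "w \<in> {Yt, S L, S j, V L, V j}" by (rule h_support)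
      then have "w = V L \<or> w = V j"
        using release(3) Yt_not_intermediate S_not_intermediate[of j] S_not_intermediate[of L] j_le by auto
      then have "r \<in> {rxn_b L, rxn_c L, rxn_b j, rxn_c j}"
        using reaction_from_V[OF r] release(1) j_le j L_pos by auto
      then show ?thesis using nz j j_le L_pos S_ne by auto
    qed
  qed
  also have "\<dots> = - k (rxn_a L) * (?h $ Yt + ?h $ S L) + k (rxn_b L) * ?h $ V L"
    using L_pos by (simp add: algebra_simps)
  also have "\<dots> = k (rxn_a L) * (2 * k (rxn_a L) + k (rxn_a j) + k (rxn_b L))"
    unfolding h_Yt h_S_L h_V_L by (simp add: algebra_simps)
  finally show ?thesis .
qed

lemma identifiable_rxn_a_L: "identifiable R (S L) 2 (\<lambda>k. k (rxn_a L))"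
proof (rule identifiable_order_twoI)
  fix k1 k2 :: "'n rxn \<Rightarrow> real"
  assume "\<And>x. mak R k1 x $ S L = mak R k2 x $ S L"
  from this[of "indicator_point {Yt, S L}"] show "k1 (rxn_a L) = k2 (rxn_a L)"
    by (simp add: mak_at_Yt_S_L)
qed

lemma identifiable_rxn_b_L: "identifiable R (S L) 2 (\<lambda>k. k (rxn_b L))"
proof (rule identifiable_order_twoI)
  fix k1 k2 :: "'n rxn \<Rightarrow> real"
  assume "\<And>x. mak R k1 x $ S L = mak R k2 x $ S L"
  from this[of "indicator_point {V L}"] show "k1 (rxn_b L) = k2 (rxn_b L)"
    by (simp add: mak_at_V_L)
qed

lemma identifiable_rxn_c_L: "identifiable R (S L) 2 (\<lambda>k. k (rxn_c L))"
proof (rule identifiable_order_twoI)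
  fix k1 k2 :: "'n rxn \<Rightarrow> real"
  assume pos: "\<forall>r\<in>R. 0 < k1 r"
    and first: "\<And>x. mak R k1 x $ S L = mak R k2 x $ S L"
    and second: "\<And>x. tdiff R k1 (\<lambda>x. mak R k1 x $ S L) x = tdiff R k2 (\<lambda>x. mak R k2 x $ S L) x"
  have b: "k1 (rxn_b L) = k2 (rxn_b L)"
    using first[of "indicator_point {V L}"] by (simp add: mak_at_V_L)
  have "0 < k1 (rxn_b L)" using pos chain_reactions_mem(2)[of L] L_pos by auto
  moreover have "k1 (rxn_b L) * (k1 (rxn_b L) + k1 (rxn_c L)) = k1 (rxn_b L) * (k1 (rxn_b L) + k2 (rxn_c L))"
    using second[of "indicator_point {V L}"] b by (simp add: tdiff_at_V_L)
  ultimately show "k1 (rxn_c L) = k2 (rxn_c L)" by simp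
qed

lemma identifiable_rxn_b_plus_rxn_c:
  assumes "1 \<le> j" "j < L"
  shows "identifiable R (S L) 2 (\<lambda>k. k (rxn_b j) + k (rxn_c j))"
proof (rule identifiable_order_twoI)
  fix k1 k2 :: "'n rxn \<Rightarrow> real"
  assume pos: "\<forall>r\<in>R. 0 < k1 r"
    and first: "\<And>x. mak R k1 x $ S L = mak R k2 x $ S L"
    and second: "\<And>x. tdiff R k1 (\<lambda>x. mak R k1 x $ S L) x = tdiff R k2 (\<lambda>x. mak R k2 x $ S L) x"
  have a: "k1 (rxn_a L) = k2 (rxn_a L)"
    using first[of "indicator_point {Yt, S L}"] by (simp add: mak_at_Yt_S_L)
  have "0 < k1 (rxn_a L)" using pos chain_reactions_mem(1)[of L] L_pos by auto
  moreover have "k1 (rxn_a L) * (k1 (rxn_b j) + k1 (rxn_c j)) = k1 (rxn_a L) * (k2 (rxn_b j) + k2 (rxn_c j))"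
    using second[of "indicator_point {S L, V j}"] a by (simp add: tdiff_at_S_L_V[OF assms])
  ultimately show "k1 (rxn_b j) + k1 (rxn_c j) = k2 (rxn_b j) + k2 (rxn_c j)" by simp
qed

lemma identifiable_rxn_a:
  assumes "1 \<le> j" "j < L"
  shows "identifiable R (S L) 2 (\<lambda>k. k (rxn_a j))"
proof (rule identifiable_order_twoI)
  fix k1 k2 :: "'n rxn \<Rightarrow> real"
  assume pos: "\<forall>r\<in>R. 0 < k1 r"
    and first: "\<And>x. mak R k1 x $ S L = mak R k2 x $ S L"
    and second: "\<And>x. tdiff R k1 (\<lambda>x. mak R k1 x $ S L) x = tdiff R k2 (\<lambda>x. mak R k2 x $ S L) x"
  have a: "k1 (rxn_a L) = k2 (rxn_a L)"
    using first[of "indicator_point {Yt, S L}"] by (simp add: mak_at_Yt_S_L)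
  have b: "k1 (rxn_b L) = k2 (rxn_b L)"
    using first[of "indicator_point {V L}"] by (simp add: mak_at_V_L)
  have "0 < k1 (rxn_a L)" using pos chain_reactions_mem(1)[of L] L_pos by auto
  moreover have "k1 (rxn_a L) * (2 * k1 (rxn_a L) + k1 (rxn_a j) + k1 (rxn_b L)) =
      k1 (rxn_a L) * (2 * k1 (rxn_a L) + k2 (rxn_a j) + k1 (rxn_b L))"
    using second[of "indicator_point {Yt, S L, S j}"] a b by (simp add: tdiff_at_Yt_S_L_S[OF assms])
  ultimately show "k1 (rxn_a j) = k2 (rxn_a j)" by simp
qed

end

theorem mainTheorem12:
  fixes C :: "'c set" and len :: "'c \<Rightarrow> nat" and E :: "'c \<Rightarrow> 'n::finite"
    and Sb I :: "'c \<Rightarrow> nat \<Rightarrow> 'n"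
    and c1 c2 :: 'c and L :: nat and Y Yt :: 'n and S U V :: "nat \<Rightarrow> 'n"
  assumes h1: "H1 C len E Sb I" and h2: "H2 C len E Sb I"
    and L: "L \<ge> 1"
    and c1: "c1 \<in> C" "len c1 = L" "E c1 = Y"
        "\<forall>j\<in>{0..L}. Sb c1 j = S j" "\<forall>j\<in>{1..L}. I c1 j = U j"
    and c2: "c2 \<in> C" "len c2 = L" "E c2 = Yt"
        "\<forall>j\<in>{0..L}. Sb c2 j = S (L - j)" "\<forall>j\<in>{1..L}. I c2 j = V (L + 1 - j)"
  shows
    "identifiable (enz_network C len E Sb I) (S L) 2
        (\<lambda>k. k (cplx2 Yt (S L), cplx1 (V L)))
     \<and> identifiable (enz_network C len E Sb I) (S L) 2
        (\<lambda>k. k (cplx1 (V L), cplx2 Yt (S L)))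
     \<and> identifiable (enz_network C len E Sb I) (S L) 2
        (\<lambda>k. k (cplx1 (V L), cplx2 Yt (S (L - 1))))
     \<and> (\<forall>j\<in>{1..L - 1}.
          identifiable (enz_network C len E Sb I) (S L) 2
            (\<lambda>k. k (cplx2 Yt (S j), cplx1 (V j)))
        \<and> identifiable (enz_network C len E Sb I) (S L) 2
            (\<lambda>k. k (cplx1 (V j), cplx2 Yt (S j)) + k (cplx1 (V j), cplx2 Yt (S (j - 1)))))"
proof -
  interpret reversed_chain_network C len E Sb I c2 L Yt S V
    using h1 h2 L c2 by unfold_locales auto
  have "1 \<le> j \<and> j < L" if "j \<in> {1..L - 1}" for j
    using that L by auto
  then show ?thesis
    using identifiable_rxn_a_L identifiable_rxn_b_L identifiable_rxn_c_L identifiable_rxn_a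
      identifiable_rxn_b_plus_rxn_c
    by blast
qed

end
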